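(* Let $N\ge 2$ and let $p,p'$ be two paths of length $N$. Then $p$ and $p'$ produce identical shapes if and only if their edge matrices are identical.
   Context: A path of length $N$ is a vector $p=(p_0,\dots,p_{N-1})$ whose entries are the integers $0,\dots,N-1$ in some order; indices are cyclic, $p_N=p_0$, $s_{-1}=s_{N-1}$. Nodes $0,\dots,N-1$ are placed at equally spaced points clockwise around a circle; the shape of $p$ is the set of chords (unordered node pairs) $\{p_n,p_{n+1}\}$, $n=0,\dots,N-1$. The path differences are $d_n=p_{n+1}-p_n$, and the steps are $s_n=d_n$ if $|d_n|<N/2$; $s_n=N/2$ if $|d_n|=N/2$; $s_n=d_n-N$ if $d_n>N/2$; $s_n=d_n+N$ if $d_n<-N/2$. The edge matrix $E=(e_{in})\in\mathbb{Z}^{2\times N}$ of $p$ is defined column by column: for node $n\in\{0,\dots,N-1\}$ let $k$ be the index with $p_k=n$; take the two integers $s_k$ and $-s_{k-1}$, replace each of them by $0$ if its absolute value equals $N/2$, and let $e_{1n}\le e_{2n}$ be these two integers sorted in nondecreasing order. *)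

theory Defs
  imports Main
begin

definition is_path :: "nat \<Rightarrow> int list \<Rightarrow> bool" where
  "is_path N p \<longleftrightarrow> length p = N \<and> distinct p \<and> set p = {0..<int N}"

definition pth :: "int list \<Rightarrow> nat \<Rightarrow> int" where
  "pth p n = p ! (n mod length p)"

definition pdiff :: "int list \<Rightarrow> nat \<Rightarrow> int" where
  "pdiff p n = pth p (n + 1) - pth p n"

definition step_of :: "nat \<Rightarrow> int \<Rightarrow> int" where
  "step_of N d =
     (if 2 * \<bar>d\<bar> < int N then d
      else if 2 * \<bar>d\<bar> = int N then int N div 2
      else if 2 * d > int N then d - int N
      else d + int N)"

definition psteps :: "int list \<Rightarrow> nat \<Rightarrow> int" where
  "psteps p n = step_of (length p) (pdiff p n)"

definition prev_idx :: "nat \<Rightarrow> nat \<Rightarrow> nat" where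
  "prev_idx N k = (k + N - 1) mod N"

definition zero_half :: "nat \<Rightarrow> int \<Rightarrow> int" where
  "zero_half N x = (if 2 * \<bar>x\<bar> = int N then 0 else x)"

definition edge_col :: "int list \<Rightarrow> nat \<Rightarrow> int \<times> int" where
  "edge_col p n =
     (let N = length p; k = (THE k. k < N \<and> p ! k = int n);
          a = zero_half N (psteps p k);
          b = zero_half N (- psteps p (prev_idx N k))
      in (min a b, max a b))"

text \<open>The edge matrix E \<in> Z^{2\<times>N}, represented as the list of its N columns.\<close>
definition edge_matrix :: "int list \<Rightarrow> (int \<times> int) list" where
  "edge_matrix p = map (edge_col p) [0..<length p]"

definition shape :: "int list \<Rightarrow> int set set" where
  "shape p = {{pth p n, pth p (n + 1)} | n. n < length p}"

end

theory Submission
  imports Defs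
begin

text \<open>Column n of the edge matrix is the sorted pair of codes of the two chords at node n, where
  the code of the chord from v to w is its step, zeroed for diameters. For fixed v the code is
  injective on the other nodes: a nonzero code is congruent to w - v modulo N, and the code 0
  belongs only to the antipode of v. A sorted pair determines the set of its entries, so column n
  carries exactly the set of neighbours of n in the shape, and a set of chords is determined by
  the neighbour sets of all nodes.\<close>

lemma step_of_diameter:
  assumes "2 * \<bar>d\<bar> = int N"
  shows "step_of N d = \<bar>d\<bar>"
  by (simp add: step_of_def flip: assms)

lemma step_of_mod_eq: "step_of N d mod int N = d mod int N"
proof (cases "2 * \<bar>d\<bar> = int N")
  case True
  then have "\<bar>d\<bar> = d \<or> \<bar>d\<bar> = d + int N" by auto
  then show ?thesis using step_of_diameter[OF True] by auto
next
  case False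
  then show ?thesis by (auto simp: step_of_def)
qed

lemma step_of_uminus: "2 * \<bar>d\<bar> \<noteq> int N \<Longrightarrow> step_of N (- d) = - step_of N d"
  unfolding step_of_def by auto

lemma zero_half_uminus_step_of:
  "zero_half N (- step_of N d) = zero_half N (step_of N (- d))"
proof (cases "2 * \<bar>d\<bar> = int N")
  case True
  then show ?thesis using step_of_diameter[of d N] step_of_diameter[of "-d" N]
    by (simp add: zero_half_def)
next
  case False
  then show ?thesis by (simp add: step_of_uminus)
qed

lemma zero_half_step_of_eq_0_iff:
  assumes "0 < \<bar>d\<bar>" "\<bar>d\<bar> < int N"
  shows "zero_half N (step_of N d) = 0 \<longleftrightarrow> 2 * \<bar>d\<bar> = int N"
  using assms step_of_diameter[of d N] by (auto simp: zero_half_def step_of_def)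

definition chord_step :: "nat \<Rightarrow> int \<Rightarrow> int \<Rightarrow> int" where
  "chord_step N v w = zero_half N (step_of N (w - v))"

lemma inj_on_chord_step:
  assumes "v \<in> {0..<int N}"
  shows "inj_on (chord_step N v) ({0..<int N} - {v})"
proof (rule inj_onI)
  fix w w' assume w: "w \<in> {0..<int N} - {v}" and w': "w' \<in> {0..<int N} - {v}"
    and eq: "chord_step N v w = chord_step N v w'"
  have zero_iff: "chord_step N v u = 0 \<longleftrightarrow> 2 * \<bar>u - v\<bar> = int N"
    if "u \<in> {0..<int N} - {v}" for u
  proof -
    have "0 < \<bar>u - v\<bar>" "\<bar>u - v\<bar> < int N" using assms that by auto
    then show ?thesis unfolding chord_step_def by (rule zero_half_step_of_eq_0_iff)
  qed
  show "w = w'"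
  proof (cases "chord_step N v w = 0")
    case True
    then have "2 * \<bar>w - v\<bar> = int N" "2 * \<bar>w' - v\<bar> = int N"
      using eq zero_iff w w' by metis+
    then show ?thesis using assms w w' by (cases "w < v"; cases "w' < v") (simp_all add: abs_if)
  next
    case False
    then have "step_of N (w - v) = step_of N (w' - v)"
      using eq by (simp add: chord_step_def zero_half_def split: if_splits)
    then have "(w - v) mod int N = (w' - v) mod int N"
      using step_of_mod_eq[of N "w - v"] step_of_mod_eq[of N "w' - v"] by simp
    then have "(w - v + v) mod int N = (w' - v + v) mod int N" by (rule mod_add_cong) simp
    then have "w mod int N = w' mod int N" by simp
    then show ?thesis using w w' by simp
  qed
qed

lemma min_max_eq_iff_doubleton_eq:
  fixes a b c d :: "'a::linorder"
  shows "(min a b, max a b) = (min c d, max c d) \<longleftrightarrow> {a, b} = {c, d}"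
  by (auto simp: min_def max_def doubleton_eq_iff split: if_splits)

lemma prev_idx_lt: "0 < N \<Longrightarrow> prev_idx N k < N"
  by (simp add: prev_idx_def)

lemma prev_idx_eq_iff:
  assumes "j < N" "k < N"
  shows "prev_idx N k = j \<longleftrightarrow> (j + 1) mod N = k"
  using assms by (cases k) (auto simp: prev_idx_def mod_if)

lemma succ_prev_idx_ne:
  assumes "2 \<le> N" "k < N"
  shows "(k + 1) mod N \<noteq> k" "prev_idx N k \<noteq> k"
  using assms by (cases k; auto simp: prev_idx_def mod_if)+

lemma path_length: "is_path N p \<Longrightarrow> length p = N"
  by (simp add: is_path_def)

lemma pth_eq_nth_mod: "is_path N p \<Longrightarrow> pth p j = p ! (j mod N)"
  by (simp add: pth_def is_path_def)

lemma path_nth_mem: "is_path N p \<Longrightarrow> i < N \<Longrightarrow> p ! i \<in> {0..<int N}"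
  unfolding is_path_def by (metis nth_mem)

lemma pth_mem: "is_path N p \<Longrightarrow> 0 < N \<Longrightarrow> pth p j \<in> {0..<int N}"
  using path_nth_mem[of N p "j mod N"] by (simp add: pth_eq_nth_mod)

lemma path_nth_eq_iff: "is_path N p \<Longrightarrow> i < N \<Longrightarrow> j < N \<Longrightarrow> p ! i = p ! j \<longleftrightarrow> i = j"
  by (simp add: is_path_def nth_eq_iff_index_eq)

lemma path_node_index:
  assumes "is_path N p" "v \<in> {0..<int N}"
  obtains k where "k < N" "p ! k = v"
  using assms that by (metis in_set_conv_nth is_path_def)

definition shape_neighbours :: "int list \<Rightarrow> int \<Rightarrow> int set" where
  "shape_neighbours p v = {w. {v, w} \<in> shape p}"

lemma shape_eq_iff_neighbours:
  "shape p = shape p' \<longleftrightarrow> (\<forall>v. shape_neighbours p v = shape_neighbours p' v)"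
proof
  assume nbrs: "\<forall>v. shape_neighbours p v = shape_neighbours p' v"
  have "{v, w} \<in> shape p \<longleftrightarrow> {v, w} \<in> shape p'" for v w
    using nbrs by (auto simp: shape_neighbours_def)
  then show "shape p = shape p'" unfolding shape_def by blast
qed (simp add: shape_neighbours_def)

lemma chord_subset_set:
  assumes "e \<in> shape p"
  shows "e \<subseteq> set p"
proof -
  obtain n where "n < length p" "e = {pth p n, pth p (n + 1)}"
    using assms by (auto simp: shape_def)
  moreover have "0 < length p" using \<open>n < length p\<close> by (cases p) auto
  ultimately show ?thesis by (auto simp: pth_def intro!: nth_mem)
qed

lemma shape_neighbours_notin: "v \<notin> set p \<Longrightarrow> shape_neighbours p v = {}"
  by (auto simp: shape_neighbours_def dest: chord_subset_set)

lemma pth_succ_prev_idx: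
  assumes "is_path N p" "k < N"
  shows "pth p (prev_idx N k + 1) = p ! k"
proof -
  have "prev_idx N k < N" using assms(2) by (simp add: prev_idx_lt)
  then have "(prev_idx N k + 1) mod N = k" using prev_idx_eq_iff assms(2) by blast
  then show ?thesis using assms(1) by (simp add: pth_eq_nth_mod)
qed

lemma shape_neighbours_path:
  assumes path: "is_path N p" and k: "k < N"
  shows "shape_neighbours p (p ! k) = {pth p (k + 1), pth p (prev_idx N k)}"
proof (intro equalityI subsetI)
  fix w assume "w \<in> shape_neighbours p (p ! k)"
  then obtain j where j: "j < N" "{p ! k, w} = {pth p j, pth p (j + 1)}"
    using path by (auto simp: shape_neighbours_def shape_def path_length)
  have pj: "pth p j = p ! j" "pth p (j + 1) = p ! ((j + 1) mod N)"
    using path j(1) by (simp_all add: pth_eq_nth_mod)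
  show "w \<in> {pth p (k + 1), pth p (prev_idx N k)}"
  proof (cases "p ! k = pth p j")
    case True
    then have "p ! j = p ! k" using pj by simp
    then have "j = k" using path_nth_eq_iff[OF path j(1) k] by simp
    then have "{p ! k, w} = {p ! k, pth p (k + 1)}" using j(2) True by simp
    then show ?thesis by (auto simp: doubleton_eq_iff)
  next
    case False
    then have succ: "p ! k = pth p (j + 1)" and w: "w = pth p j"
      using j(2) by (auto simp: doubleton_eq_iff)
    have "(j + 1) mod N < N" using j(1) by simp
    then have "(j + 1) mod N = k" using path_nth_eq_iff[OF path _ k] succ pj by metis
    then show ?thesis using w prev_idx_eq_iff[OF j(1) k] by simp
  qed
next
  fix w assume w: "w \<in> {pth p (k + 1), pth p (prev_idx N k)}"
  have "0 < N" using k by simp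
  have "{pth p k, pth p (k + 1)} \<in> shape p"
    "{pth p (prev_idx N k), pth p (prev_idx N k + 1)} \<in> shape p"
    using path k prev_idx_lt[OF \<open>0 < N\<close>] by (auto simp: shape_def path_length)
  moreover have "pth p k = p ! k" using path k by (simp add: pth_eq_nth_mod)
  ultimately have "{p ! k, pth p (k + 1)} \<in> shape p" "{p ! k, pth p (prev_idx N k)} \<in> shape p"
    using pth_succ_prev_idx[OF path k] by (simp_all add: insert_commute)
  then show "w \<in> shape_neighbours p (p ! k)"
    using w by (auto simp: shape_neighbours_def)
qed

lemma path_neighbours_ne:
  assumes path: "is_path N p" and "2 \<le> N" "k < N"
  shows "pth p (k + 1) \<noteq> p ! k" "pth p (prev_idx N k) \<noteq> p ! k"
  using assms path_nth_eq_iff[OF path] succ_prev_idx_ne[OF assms(2,3)] prev_idx_lt[of N k]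
  by (simp_all add: pth_eq_nth_mod)

lemma edge_col_path:
  assumes path: "is_path N p" and k: "k < N" "p ! k = int n"
  shows "edge_col p n =
    (min (chord_step N (int n) (pth p (k + 1))) (chord_step N (int n) (pth p (prev_idx N k))),
     max (chord_step N (int n) (pth p (k + 1))) (chord_step N (int n) (pth p (prev_idx N k))))"
proof -
  have "(THE k. k < N \<and> p ! k = int n) = k"
  proof (rule the_equality)
    fix j assume "j < N \<and> p ! j = int n"
    then show "j = k" using path_nth_eq_iff[OF path, of j k] k by simp
  qed (use k in simp)
  moreover have "psteps p k = step_of N (pth p (k + 1) - int n)"
    using path k by (simp add: psteps_def pdiff_def path_length pth_eq_nth_mod)
  moreover have "psteps p (prev_idx N k) = step_of N (int n - pth p (prev_idx N k))"
    using pth_succ_prev_idx[OF path k(1)] k path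
    by (simp add: psteps_def pdiff_def path_length)
  ultimately show ?thesis
    using path by (simp add: edge_col_def Let_def chord_step_def path_length zero_half_uminus_step_of)
qed

lemma edge_col_eq_iff_shape_neighbours:
  assumes path: "is_path N p" and path': "is_path N p'" and "2 \<le> N" "n < N"
  shows "edge_col p n = edge_col p' n \<longleftrightarrow>
    shape_neighbours p (int n) = shape_neighbours p' (int n)"
proof -
  have node: "int n \<in> {0..<int N}" using \<open>n < N\<close> by simp
  obtain k where k: "k < N" "p ! k = int n" using path_node_index[OF path node] .
  obtain k' where k': "k' < N" "p' ! k' = int n" using path_node_index[OF path' node] .
  define s where "s = pth p (k + 1)"
  define t where "t = pth p (prev_idx N k)"
  define s' where "s' = pth p' (k' + 1)"
  define t' where "t' = pth p' (prev_idx N k')"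
  have "{s, t} \<union> {s', t'} \<subseteq> {0..<int N} - {int n}"
    using path_neighbours_ne[OF path \<open>2 \<le> N\<close> k(1)] path_neighbours_ne[OF path' \<open>2 \<le> N\<close> k'(1)]
      pth_mem[OF path] pth_mem[OF path'] k k'
    unfolding s_def t_def s'_def t'_def by auto
  then have inj: "inj_on (chord_step N (int n)) ({s, t} \<union> {s', t'})"
    by (rule inj_on_subset[OF inj_on_chord_step[OF node]])
  have "edge_col p n = edge_col p' n \<longleftrightarrow>
      {chord_step N (int n) s, chord_step N (int n) t} = {chord_step N (int n) s', chord_step N (int n) t'}"
    unfolding edge_col_path[OF path k] edge_col_path[OF path' k'] s_def t_def s'_def t'_def
    by (rule min_max_eq_iff_doubleton_eq)
  also have "\<dots> \<longleftrightarrow> chord_step N (int n) ` {s, t} = chord_step N (int n) ` {s', t'}"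
    by simp
  also have "\<dots> \<longleftrightarrow> {s, t} = {s', t'}"
    by (rule inj_on_image_eq_iff[OF inj]) auto
  finally show ?thesis
    using shape_neighbours_path[OF path k(1)] shape_neighbours_path[OF path' k'(1)] k k'
    by (simp add: s_def t_def s'_def t'_def)
qed

theorem mainTheorem4:
  fixes N :: nat and p p' :: "int list"
  assumes "N \<ge> 2" and "is_path N p" and "is_path N p'"
  shows "shape p = shape p' \<longleftrightarrow> edge_matrix p = edge_matrix p'"
proof -
  have nodes: "set p = {0..<int N}" "set p' = {0..<int N}"
    using assms by (simp_all add: is_path_def)
  have "shape p = shape p' \<longleftrightarrow> (\<forall>v. shape_neighbours p v = shape_neighbours p' v)"
    by (rule shape_eq_iff_neighbours)
  also have "\<dots> \<longleftrightarrow> (\<forall>n<N. shape_neighbours p (int n) = shape_neighbours p' (int n))"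
    using shape_neighbours_notin[of _ p] shape_neighbours_notin[of _ p'] nodes
    by (metis atLeastLessThan_iff nat_0_le nat_less_iff)
  also have "\<dots> \<longleftrightarrow> (\<forall>n<N. edge_col p n = edge_col p' n)"
    using edge_col_eq_iff_shape_neighbours[OF assms(2,3,1)] by simp
  also have "\<dots> \<longleftrightarrow> edge_matrix p = edge_matrix p'"
    using assms by (auto simp: edge_matrix_def path_length)
  finally show ?thesis .
qed

end
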